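(* Let $\mathcal S$ be a finite subset of the unit sphere $\mathbb S^{n-1}\subset\mathbb R^n$ such that $\mathrm{Span}_{\mathbb R}\mathcal S=\mathbb R^n$ and $-v\in\mathcal S$ whenever $v\in\mathcal S$. Then there exist a basis $\mathcal B$ of $\mathbb R^n$ contained in $\mathcal S$ and linear maps $F:\mathbb R^n\to\mathbb R^n$ arbitrarily close to the identity such that for all $v\in\mathcal S$: $|Fv|=|v|$ if $v\in\mathcal B$ or $-v\in\mathcal B$, and $|Fv|>|v|$ otherwise.
   Context: $|\cdot|$ is the euclidean norm on $\mathbb R^n$. *)

theory Defs
  imports "HOL-Analysis.Analysis"
begin

end

theory Submission
  imports Defs
begin

(* We build a basis B inside S
   greedily: at each stage we adjoin a vector b of S outside span B whose component
   h orthogonal to span B is shortest.  The invariant ("B is admissible") is that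
   linear maps arbitrarily close to the identity keep the vectors of +-B at length 1
   and strictly lengthen every other vector of S lying in span B.

   To adjoin b = p + h (p in span B) we shear along h so that b is sent to the
   normalized "tilt" (t p + h) / |t p + h| with t slightly below 1, and compose with
   a witness for B.  Minimality of h gives |s| >= 1 for every new vector x + s b of S,
   and an elementary computation (tilted_image_expands) shows that the tilt makes all
   such vectors strictly longer, while b itself stays a unit vector. *)

definition orth_part :: "'a::euclidean_space set \<Rightarrow> 'a \<Rightarrow> 'a" where
  "orth_part B v = (THE z. v - z \<in> span B \<and> (\<forall>w\<in>span B. z \<bullet> w = 0))"

lemma orth_part_unique_aux:
  fixes B :: "'a::euclidean_space set"
  assumes "v - z \<in> span B" "\<And>w. w \<in> span B \<Longrightarrow> z \<bullet> w = 0"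
    and "v - z' \<in> span B" "\<And>w. w \<in> span B \<Longrightarrow> z' \<bullet> w = 0"
  shows "z = z'"
proof -
  have "z - z' \<in> span B"
    using span_diff[OF assms(3,1)] by (simp add: algebra_simps)
  then have "(z - z') \<bullet> (z - z') = 0"
    using assms(2,4) by (simp add: inner_diff_left)
  then show ?thesis by simp
qed

lemma orth_part:
  fixes B :: "'a::euclidean_space set"
  shows "v - orth_part B v \<in> span B" and "w \<in> span B \<Longrightarrow> orth_part B v \<bullet> w = 0"
proof -
  obtain y z where "y \<in> span B" "\<And>w. w \<in> span B \<Longrightarrow> orthogonal z w" "v = y + z"
    using orthogonal_subspace_decomp_exists by blast
  then have ex: "v - z \<in> span B \<and> (\<forall>w\<in>span B. z \<bullet> w = 0)"
    by (simp add: orthogonal_def)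
  have "v - orth_part B v \<in> span B \<and> (\<forall>w\<in>span B. orth_part B v \<bullet> w = 0)"
    unfolding orth_part_def
    by (rule theI[of _ z]) (use ex orth_part_unique_aux in blast)+
  then show "v - orth_part B v \<in> span B" and "w \<in> span B \<Longrightarrow> orth_part B v \<bullet> w = 0"
    by blast+
qed

lemma orth_part_unique:
  fixes B :: "'a::euclidean_space set"
  assumes "v - z \<in> span B" and "\<And>w. w \<in> span B \<Longrightarrow> z \<bullet> w = 0"
  shows "orth_part B v = z"
  using orth_part_unique_aux[OF orth_part assms] by blast

lemma orth_part_eq_0_iff:
  fixes B :: "'a::euclidean_space set"
  shows "orth_part B v = 0 \<longleftrightarrow> v \<in> span B"
proof
  assume "orth_part B v = 0"
  then show "v \<in> span B" using orth_part(1)[of v B] by simp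
next
  assume "v \<in> span B"
  then show "orth_part B v = 0" by (intro orth_part_unique) auto
qed

definition shear :: "'a::real_inner \<Rightarrow> 'a \<Rightarrow> 'a \<Rightarrow> 'a \<Rightarrow> 'a" where
  "shear h b w u = u + ((u \<bullet> h) / (h \<bullet> h)) *\<^sub>R (w - b)"

lemma linear_shear: "linear (shear h b w)"
  unfolding shear_def
  by (rule linearI) (simp_all add: add_divide_distrib algebra_simps)

lemma shear_fixes: "u \<bullet> h = 0 \<Longrightarrow> shear h b w u = u"
  by (simp add: shear_def)

lemma shear_moves: "b \<bullet> h = h \<bullet> h \<Longrightarrow> h \<noteq> 0 \<Longrightarrow> shear h b w b = w"
  by (simp add: shear_def)

lemma shear_near_identity:
  assumes "h \<noteq> 0"
  shows "norm (shear h b w u - u) \<le> norm (w - b) / norm h * norm u"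
proof -
  have hh: "h \<bullet> h = norm h * norm h" by (simp add: power2_norm_eq_inner[symmetric] power2_eq_square)
  have "norm (shear h b w u - u) = \<bar>u \<bullet> h\<bar> / (norm h * norm h) * norm (w - b)"
    by (simp add: shear_def hh)
  also have "\<dots> \<le> norm u * norm h / (norm h * norm h) * norm (w - b)"
    by (intro mult_right_mono divide_right_mono Cauchy_Schwarz_ineq2) auto
  also have "\<dots> = norm (w - b) / norm h * norm u" using assms by simp
  finally show ?thesis .
qed

lemma tendsto_shear:
  assumes "(w \<longlongrightarrow> w0) F"
  shows "((\<lambda>m. shear h b (w m) u) \<longlongrightarrow> shear h b w0 u) F"
  unfolding shear_def by (intro tendsto_intros assms)

lemma near_identity_compose:
  fixes F R :: "'a::real_normed_vector \<Rightarrow> 'a"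
  assumes a: "0 \<le> a" and F: "\<And>x. norm (F x - x) \<le> a * norm x" and R: "\<And>x. norm (R x - x) \<le> k * norm x"
  shows "norm (F (R x) - x) \<le> (a * (1 + k) + k) * norm x"
proof -
  have "norm (R x) \<le> (1 + k) * norm x"
    using R[of x] norm_triangle_ineq[of x "R x - x"] by (simp add: algebra_simps)
  then have "norm (F (R x) - R x) \<le> a * ((1 + k) * norm x)"
    using F[of "R x"] a by (meson mult_left_mono order_trans)
  then show ?thesis
    using R[of x] norm_triangle_ineq[of "F (R x) - R x" "R x - x"] by (simp add: algebra_simps)
qed

lemma near_identity_tendsto:
  fixes F :: "nat \<Rightarrow> 'a::real_normed_vector \<Rightarrow> 'a"
  assumes F: "\<And>m x. norm (F m x - x) \<le> d m * norm x" and d: "d \<longlonglongrightarrow> 0"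
    and y: "y \<longlonglongrightarrow> l"
  shows "(\<lambda>m. F m (y m)) \<longlonglongrightarrow> l"
proof -
  have "(\<lambda>m. d m * norm (y m)) \<longlonglongrightarrow> 0 * norm l"
    by (intro tendsto_intros d y)
  then have "(\<lambda>m. d m * norm (y m)) \<longlonglongrightarrow> 0"
    by simp
  moreover have "eventually (\<lambda>m. norm (F m (y m) - y m) \<le> d m * norm (y m)) sequentially"
    using F by (simp add: always_eventually)
  ultimately have "(\<lambda>m. F m (y m) - y m) \<longlonglongrightarrow> 0"
    using Lim_null_comparison[of "\<lambda>m. F m (y m) - y m" "\<lambda>m. d m * norm (y m)"] by blast
  then show ?thesis by (rule Lim_transform[OF y])
qed

lemma tilt_norm_gt:
  fixes p h :: "'a::real_inner"
  assumes ph: "p \<bullet> h = 0" and unit: "norm (p + h) = 1" and h: "h \<noteq> 0"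
    and t: "0 < t" "t < 1"
  shows "t < norm (t *\<^sub>R p + h)"
proof -
  have "(p + h) \<bullet> (p + h) = 1"
    using unit by (simp add: dot_square_norm)
  then have pp: "p \<bullet> p = 1 - h \<bullet> h"
    using ph by (simp add: inner_add_left inner_add_right inner_commute)
  have "norm (t *\<^sub>R p + h) ^ 2 = t^2 * (p \<bullet> p) + h \<bullet> h"
    using ph by (simp only: dot_square_norm[symmetric])
      (simp add: inner_add_left inner_add_right inner_commute power2_eq_square)
  also have "\<dots> = t^2 + (1 - t^2) * (h \<bullet> h)"
    by (simp add: pp algebra_simps)
  also have "\<dots> > t^2"
    using h t by (simp add: power_less_one_iff)
  finally show ?thesis
    by (rule power2_less_imp_less) simp
qed

lemma tilt_towards:
  fixes p h :: "'a::real_inner"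
  assumes unit: "norm (p + h) = 1" and e: "0 < e"
  obtains t where "0 < t" "t < 1"
    and "norm ((1 / norm (t *\<^sub>R p + h)) *\<^sub>R (t *\<^sub>R p + h) - (p + h)) < e"
proof -
  let ?d = "\<lambda>t. norm ((1 / norm (t *\<^sub>R p + h)) *\<^sub>R (t *\<^sub>R p + h) - (p + h))"
  have "(?d \<longlongrightarrow> ?d 1) (at_left 1)"
    using unit by (intro tendsto_intros) auto
  then have "(?d \<longlongrightarrow> 0) (at_left 1)"
    using unit by simp
  then have "eventually (\<lambda>t. ?d t < e) (at_left 1)"
    using e by (rule order_tendstoD(2))
  moreover have "eventually (\<lambda>t. t \<in> {0<..<(1::real)}) (at_left 1)"
    by (rule eventually_at_left_real) simp
  moreover have "at_left (1::real) \<noteq> bot"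
    by simp
  ultimately obtain t where "?d t < e" "t \<in> {0<..<1}"
    using eventually_happens'[OF _ eventually_conj] by blast
  then show ?thesis using that by auto
qed

(* Expanding |v|^2 = 1 forces s (x.p) < 0, and the tilt shrinks the weight
   of this negative cross term by the factor t / |t p + h| < 1. *)
lemma tilted_image_expands:
  fixes x p h b :: "'a::real_inner"
  assumes bdec: "b = p + h" and ph: "p \<bullet> h = 0" and h: "h \<noteq> 0" and nb: "norm b = 1"
    and xh: "x \<bullet> h = 0" and x: "x \<noteq> 0"
    and nv: "norm (x + s *\<^sub>R b) = 1" and s: "1 \<le> \<bar>s\<bar>"
    and t: "0 < t" "t < 1"
  shows "1 < norm (x + (s / norm (t *\<^sub>R p + h)) *\<^sub>R (t *\<^sub>R p + h))"
proof -
  define q where "q = t *\<^sub>R p + h"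
  define N where "N = norm q"
  have tN: "t < N"
    unfolding N_def q_def using tilt_norm_gt[OF ph _ h t] nb bdec by simp
  have bb: "b \<bullet> b = 1" and qq: "q \<bullet> q = N^2"
    using nb by (simp_all add: N_def dot_square_norm)
  have xb: "x \<bullet> b = x \<bullet> p" and xq: "x \<bullet> q = t * (x \<bullet> p)"
    using xh by (simp_all add: bdec q_def inner_add_right)
  have "norm (x + s *\<^sub>R b) ^ 2 = x \<bullet> x + 2 * (s * (x \<bullet> p)) + s^2"
    using bb xb by (simp only: dot_square_norm[symmetric])
      (simp add: inner_commute power2_eq_square algebra_simps)
  then have vv: "x \<bullet> x + 2 * (s * (x \<bullet> p)) + s^2 = 1"
    using nv by simp
  have "1 \<le> s^2"
    using s by (metis abs_one abs_le_square_iff power_one)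
  moreover have "0 < x \<bullet> x" using x by simp
  ultimately have neg: "s * (x \<bullet> p) < 0" using vv by linarith
  have "norm (x + (s / N) *\<^sub>R q) ^ 2 = x \<bullet> x + 2 * ((s * (x \<bullet> p)) * (t / N)) + s^2"
    using tN t qq xq by (simp only: dot_square_norm[symmetric])
      (simp add: inner_add_left inner_add_right inner_commute power2_eq_square field_simps)
  also have "\<dots> > 1"
  proof -
    have "t / N < 1" using tN t by simp
    then have "(s * (x \<bullet> p)) * 1 < (s * (x \<bullet> p)) * (t / N)"
      by (rule mult_strict_left_mono_neg[OF _ neg])
    then show ?thesis using vv by linarith
  qed
  finally have "1 ^ 2 < norm (x + (s / N) *\<^sub>R q) ^ 2"
    by simp
  then have "1 < norm (x + (s / N) *\<^sub>R q)"
    by (rule power2_less_imp_less) simp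
  then show ?thesis by (simp add: N_def q_def)
qed

definition preserves_expands :: "('a::real_normed_vector \<Rightarrow> 'a) \<Rightarrow> 'a set \<Rightarrow> 'a set \<Rightarrow> bool" where
  "preserves_expands F S B \<longleftrightarrow> (\<forall>v\<in>S. ((v \<in> B \<or> - v \<in> B) \<longrightarrow> norm (F v) = norm v) \<and>
      (\<not> (v \<in> B \<or> - v \<in> B) \<longrightarrow> norm (F v) > norm v))"

definition admissible :: "'a::euclidean_space set \<Rightarrow> 'a set \<Rightarrow> bool" where
  "admissible S B \<longleftrightarrow> (\<forall>e>0. \<exists>F. linear F \<and> (\<forall>x. norm (F x - x) \<le> e * norm x) \<and>
      preserves_expands F (S \<inter> span B) B)"

lemma admissible_empty:
  assumes "S \<subseteq> sphere 0 1"
  shows "admissible S {}"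
proof -
  have "S \<inter> span {} = {}" using assms by auto
  then show ?thesis
    unfolding admissible_def preserves_expands_def by (auto intro!: exI[of _ id] linear_id)
qed

lemma admissible_sequence:
  assumes "admissible S B"
  obtains F where "\<And>m. linear (F m)"
    and "\<And>m x. norm (F m x - x) \<le> inverse (real (Suc m)) * norm x"
    and "\<And>m. preserves_expands (F m) (S \<inter> span B) B"
proof -
  have "\<forall>m. \<exists>F. linear F \<and> (\<forall>x. norm (F x - x) \<le> inverse (real (Suc m)) * norm x) \<and>
      preserves_expands F (S \<inter> span B) B"
    using assms unfolding admissible_def by simp
  then show ?thesis using that by metis
qed

(* If b has the shortest orthogonal part h among the vectors of S outside span B,
   then any map fixing span B and sending b to the normalized tilt of b expands every
   unit vector v of span (insert b B) other than +-b: writing v = x + s b with x in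
   span B, minimality gives |s| >= 1, and tilted_image_expands applies. *)
lemma new_vector_expands:
  fixes B :: "'a::euclidean_space set"
  assumes h: "h = orth_part B b" "h \<noteq> 0" and p: "p = b - h" and nb: "norm b = 1"
    and minimal: "norm h \<le> norm (orth_part B v)"
    and R: "linear R" "\<And>x. x \<in> span B \<Longrightarrow> R x = x"
      "R b = (1 / norm (t *\<^sub>R p + h)) *\<^sub>R (t *\<^sub>R p + h)"
    and t: "0 < t" "t < 1"
    and v: "norm v = 1" "v \<in> span (insert b B)" "v \<noteq> b" "v \<noteq> - b"
  shows "1 < norm (R v)"
proof -
  obtain s where xB: "v - s *\<^sub>R b \<in> span B"
    using v(2) span_breakdown_eq by blast
  define x where "x = v - s *\<^sub>R b"
  have pB: "p \<in> span B"
    using orth_part(1)[of b B] by (simp add: h p)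
  have horth: "h \<bullet> w = 0" if "w \<in> span B" for w
    using orth_part(2)[OF that] by (simp add: h)
  have "orth_part B v = s *\<^sub>R h"
  proof (rule orth_part_unique)
    have "x + s *\<^sub>R p \<in> span B"
      using xB pB by (simp add: x_def span_add span_scale)
    moreover have "v - s *\<^sub>R h = x + s *\<^sub>R p"
      by (simp add: x_def p algebra_simps)
    ultimately show "v - s *\<^sub>R h \<in> span B" by simp
  qed (simp add: horth)
  then have s: "1 \<le> \<bar>s\<bar>" using minimal h(2) by simp
  have x0: "x \<noteq> 0"
  proof
    assume "x = 0"
    then have "v = s *\<^sub>R b" by (simp add: x_def)
    moreover from this have "\<bar>s\<bar> = 1" using v(1) nb by simp
    ultimately show False using v(3,4) by (cases "s \<ge> 0") auto
  qed
  have "v = x + s *\<^sub>R b" by (simp add: x_def)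
  then have "R v = R x + s *\<^sub>R R b"
    by (simp add: linear_add[OF R(1)] linear_scale[OF R(1)])
  also have "\<dots> = x + (s / norm (t *\<^sub>R p + h)) *\<^sub>R (t *\<^sub>R p + h)"
    using R(2)[OF xB] R(3) by (simp add: x_def)
  finally have "R v = x + (s / norm (t *\<^sub>R p + h)) *\<^sub>R (t *\<^sub>R p + h)" .
  moreover have "1 < norm (x + (s / norm (t *\<^sub>R p + h)) *\<^sub>R (t *\<^sub>R p + h))"
  proof (rule tilted_image_expands[where b = b])
    show "p \<bullet> h = 0" using horth[OF pB] by (simp add: inner_commute)
    show "x \<bullet> h = 0" using horth[OF xB] by (simp add: x_def inner_commute)
    show "norm (x + s *\<^sub>R b) = 1" using v(1) by (simp add: x_def)
  qed (use p h nb x0 s t in auto)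
  ultimately show ?thesis by simp
qed

lemma preserves_expands_insert:
  assumes sph: "S \<subseteq> sphere 0 1" and b: "b \<notin> span B" and G: "linear G"
    and old: "preserves_expands F (S \<inter> span B) B" "\<And>v. v \<in> span B \<Longrightarrow> G v = F v"
    and Gb: "norm (G b) = 1"
    and new: "\<And>v. v \<in> S \<Longrightarrow> v \<in> span (insert b B) \<Longrightarrow> v \<notin> span B \<Longrightarrow> v \<noteq> b \<Longrightarrow> v \<noteq> - b
      \<Longrightarrow> 1 < norm (G v)"
  shows "preserves_expands G (S \<inter> span (insert b B)) (insert b B)"
  unfolding preserves_expands_def
proof
  fix v assume v: "v \<in> S \<inter> span (insert b B)"
  then have nv: "norm v = 1" using sph by auto
  show "((v \<in> insert b B \<or> - v \<in> insert b B) \<longrightarrow> norm (G v) = norm v) \<and>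
      (\<not> (v \<in> insert b B \<or> - v \<in> insert b B) \<longrightarrow> norm (G v) > norm v)"
  proof (cases "v \<in> span B")
    case True
    then have "v \<noteq> b" "- v \<noteq> b" using b span_neg by force+
    then show ?thesis
      using old True v unfolding preserves_expands_def by auto
  next
    case False
    then have "v \<notin> B" "- v \<notin> B" using span_base span_neg by force+
    moreover have "norm (G (- b)) = 1" using Gb by (simp add: linear_neg[OF G])
    moreover have "v \<noteq> - b \<longleftrightarrow> - v \<noteq> b" by auto
    ultimately show ?thesis
      using new[of v] v False nv Gb by auto
  qed
qed

(* The limiting argument of the induction step, for a fixed target: composing a
   sequence F m of maps converging to the identity with shears sending b to the
   multiple of q that F m maps to a unit vector yields, for some m, a map that is
   e-close to the identity, keeps b a unit vector and expands the finitely many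
   vectors expanded by the limiting shear onto q / |q|. *)
lemma sheared_witness:
  fixes F :: "nat \<Rightarrow> 'a::euclidean_space \<Rightarrow> 'a"
  assumes F: "\<And>m. linear (F m)"
    and F_close: "\<And>m x. norm (F m x - x) \<le> inverse (real (Suc m)) * norm x"
    and h0: "h \<noteq> 0" and bh: "b \<bullet> h = h \<bullet> h" and nq: "0 < norm q"
    and w_def: "\<And>m. w m = (1 / norm (F m q)) *\<^sub>R q"
    and tilt: "norm ((1 / norm q) *\<^sub>R q - b) < e * norm h"
    and N: "finite N" "\<And>v. v \<in> N \<Longrightarrow> 1 < norm (shear h b ((1 / norm q) *\<^sub>R q) v)"
  obtains m where "\<And>x. norm (F m (shear h b (w m) x) - x) \<le> e * norm x"
    and "norm (F m (shear h b (w m) b)) = 1"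
    and "\<And>v. v \<in> N \<Longrightarrow> 1 < norm (F m (shear h b (w m) v))"
proof -
  define K where "K m = norm (w m - b) / norm h" for m
  have inv_Suc: "(\<lambda>m. inverse (real (Suc m))) \<longlonglongrightarrow> 0"
    using LIMSEQ_inverse_real_of_nat .
  have Fq: "(\<lambda>m. F m q) \<longlonglongrightarrow> q"
    using near_identity_tendsto[OF F_close inv_Suc tendsto_const] .
  have w: "w \<longlonglongrightarrow> (1 / norm q) *\<^sub>R q"
    unfolding w_def using nq by (intro tendsto_intros Fq) auto
  have comp_lim: "(\<lambda>m. F m (shear h b (w m) u)) \<longlonglongrightarrow> shear h b ((1 / norm q) *\<^sub>R q) u" for u
    by (rule near_identity_tendsto[OF F_close inv_Suc tendsto_shear[OF w]])
  have comp_close: "norm (F m (shear h b (w m) u) - u) \<le> (inverse (real (Suc m)) * (1 + K m) + K m) * norm u"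
    for m u
    unfolding K_def by (rule near_identity_compose[OF _ F_close shear_near_identity[OF h0]]) simp
  have "(\<lambda>m. inverse (real (Suc m)) * (1 + K m) + K m) \<longlonglongrightarrow>
      0 * (1 + norm ((1 / norm q) *\<^sub>R q - b) / norm h) + norm ((1 / norm q) *\<^sub>R q - b) / norm h"
    unfolding K_def by (intro tendsto_intros inv_Suc w) (use h0 in auto)
  moreover have "norm ((1 / norm q) *\<^sub>R q - b) / norm h < e"
    using tilt h0 by (simp add: pos_divide_less_eq)
  ultimately have ev_close: "eventually (\<lambda>m. inverse (real (Suc m)) * (1 + K m) + K m < e) sequentially"
    by (simp add: order_tendstoD(2))
  have ev_unit: "eventually (\<lambda>m. 0 < norm (F m q)) sequentially"
    using nq by (rule order_tendstoD(1)[OF tendsto_norm[OF Fq]])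
  have ev_new: "eventually (\<lambda>m. \<forall>v\<in>N. 1 < norm (F m (shear h b (w m) v))) sequentially"
    using N by (intro eventually_ball_finite ballI order_tendstoD(1)[OF tendsto_norm[OF comp_lim]]) auto
  obtain m where m_close: "inverse (real (Suc m)) * (1 + K m) + K m < e"
    and m_unit: "0 < norm (F m q)" and m_new: "\<forall>v\<in>N. 1 < norm (F m (shear h b (w m) v))"
    using eventually_happens'[OF sequentially_bot eventually_conj[OF ev_close eventually_conj[OF ev_unit ev_new]]]
    by blast
  show ?thesis
  proof
    show "norm (F m (shear h b (w m) x) - x) \<le> e * norm x" for x
      using comp_close[of m x] m_close by (meson mult_right_mono norm_ge_zero less_imp_le order_trans)
    show "norm (F m (shear h b (w m) b)) = 1"
      using bh h0 m_unit by (simp add: shear_moves w_def linear_scale[OF F])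
  qed (use m_new in blast)
qed

(* We tilt b = p + h to q = t p + h with t so close to 1 that
   q / |q| is close to b, and apply sheared_witness to the new vectors of S, which
   the shear onto q / |q| expands by new_vector_expands. *)
lemma admissible_insert:
  fixes S B :: "'a::euclidean_space set"
  assumes fin: "finite S" and sph: "S \<subseteq> sphere 0 1" and adm: "admissible S B"
    and b: "b \<in> S" "b \<notin> span B"
    and minimal: "\<And>v. v \<in> S \<Longrightarrow> v \<notin> span B \<Longrightarrow> norm (orth_part B b) \<le> norm (orth_part B v)"
  shows "admissible S (insert b B)"
  unfolding admissible_def
proof (intro allI impI)
  fix e :: real assume e: "0 < e"
  define h where "h = orth_part B b"
  define p where "p = b - h"
  have h0: "h \<noteq> 0" using b(2) by (simp add: h_def orth_part_eq_0_iff)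
  have horth: "u \<bullet> h = 0" if "u \<in> span B" for u
    using orth_part(2)[OF that] by (simp add: h_def inner_commute)
  have bdec: "b = p + h" by (simp add: p_def)
  have ph: "p \<bullet> h = 0" using horth orth_part(1)[of b B] by (simp add: p_def h_def)
  have bh: "b \<bullet> h = h \<bullet> h" using ph by (simp add: bdec inner_add_left)
  have nb: "norm b = 1" using sph b by auto
  obtain t where t: "0 < t" "t < 1"
    and tilt: "norm ((1 / norm (t *\<^sub>R p + h)) *\<^sub>R (t *\<^sub>R p + h) - b) < e * norm h"
    using tilt_towards[of p h "e * norm h"] e h0 nb bdec by auto
  define q where "q = t *\<^sub>R p + h"
  have "t < norm q" using tilt_norm_gt[OF ph _ h0 t] nb bdec by (simp add: q_def)
  with t have nq: "0 < norm q" by linarith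
  define N where "N = {v \<in> S. v \<in> span (insert b B) \<and> v \<notin> span B \<and> v \<noteq> b \<and> v \<noteq> - b}"
  have N_expands: "1 < norm (shear h b ((1 / norm q) *\<^sub>R q) v)" if "v \<in> N" for v
  proof (rule new_vector_expands[OF h_def h0 p_def nb _ linear_shear _ _ t])
    show "norm h \<le> norm (orth_part B v)" using minimal that by (simp add: N_def h_def)
    show "shear h b ((1 / norm q) *\<^sub>R q) x = x" if "x \<in> span B" for x
      using horth[OF that] by (rule shear_fixes)
    show "shear h b ((1 / norm q) *\<^sub>R q) b = (1 / norm (t *\<^sub>R p + h)) *\<^sub>R (t *\<^sub>R p + h)"
      using bh h0 by (simp add: shear_moves q_def)
  qed (use that sph in \<open>auto simp: N_def\<close>)
  obtain F where F: "\<And>m. linear (F m)"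
    and F_close: "\<And>m x. norm (F m x - x) \<le> inverse (real (Suc m)) * norm x"
    and F_old: "\<And>m. preserves_expands (F m) (S \<inter> span B) B"
    using admissible_sequence[OF adm] by blast
  define w where "w m = (1 / norm (F m q)) *\<^sub>R q" for m
  have tilt_q: "norm ((1 / norm q) *\<^sub>R q - b) < e * norm h"
    using tilt by (simp add: q_def)
  have finite_N: "finite N"
    using fin by (simp add: N_def)
  obtain m where G_close: "\<And>x. norm (F m (shear h b (w m) x) - x) \<le> e * norm x"
    and G_b: "norm (F m (shear h b (w m) b)) = 1"
    and G_new: "\<And>v. v \<in> N \<Longrightarrow> 1 < norm (F m (shear h b (w m) v))"
    using sheared_witness[OF F F_close h0 bh nq w_def tilt_q finite_N N_expands] by blast
  define G where "G = F m \<circ> shear h b (w m)"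
  show "\<exists>G. linear G \<and> (\<forall>x. norm (G x - x) \<le> e * norm x) \<and>
      preserves_expands G (S \<inter> span (insert b B)) (insert b B)"
  proof (intro exI[of _ G] conjI allI)
    show G_lin: "linear G"
      unfolding G_def by (rule linear_compose[OF linear_shear F])
    show "norm (G x - x) \<le> e * norm x" for x
      using G_close by (simp add: G_def)
    have "G v = F m v" if "v \<in> span B" for v
      using horth[OF that] by (simp add: G_def shear_fixes)
    then show "preserves_expands G (S \<inter> span (insert b B)) (insert b B)"
      using preserves_expands_insert[OF sph b(2) G_lin F_old] G_b G_new
      by (simp add: G_def N_def)
  qed
qed

lemma admissible_extend:
  fixes S B :: "'a::euclidean_space set"
  assumes fin: "finite S" and sph: "S \<subseteq> sphere 0 1" and spS: "span S = UNIV"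
    and adm: "admissible S B" and small: "span B \<noteq> UNIV"
  obtains b where "b \<in> S" "b \<notin> span B" "admissible S (insert b B)"
proof -
  define T where "T = S - span B"
  have "\<not> S \<subseteq> span B"
    using small spS by (metis span_minimal subspace_span top.extremum_unique)
  then have "T \<noteq> {}" by (auto simp: T_def)
  then obtain b where bT: "b \<in> T" and bmin: "\<And>v. v \<in> T \<Longrightarrow> norm (orth_part B b) \<le> norm (orth_part B v)"
    using arg_min_if_finite[of T "\<lambda>v. norm (orth_part B v)"] fin unfolding T_def
    by (metis finite_Diff not_less)
  then have "admissible S (insert b B)"
    using admissible_insert[OF fin sph adm] by (simp add: T_def)
  then show ?thesis using that bT unfolding T_def by blast
qed

lemma admissible_basis_exists:
  fixes S :: "'a::euclidean_space set"
  assumes fin: "finite S" and sph: "S \<subseteq> sphere 0 1" and spS: "span S = UNIV"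
  shows "\<exists>B. B \<subseteq> S \<and> independent B \<and> span B = UNIV \<and> admissible S B"
proof -
  have "\<exists>B. B \<subseteq> S \<and> independent B \<and> card B = k \<and> admissible S B" if "k \<le> DIM('a)" for k
    using that
  proof (induction k)
    case 0
    show ?case using admissible_empty[OF sph] by (intro exI[of _ "{}"]) (auto simp: independent_empty)
  next
    case (Suc k)
    then obtain B where B: "B \<subseteq> S" "independent B" "card B = k" "admissible S B"
      by auto
    have "dim (span B) = k"
      using dim_span_eq_card_independent[OF B(2)] B(3) by simp
    then have "span B \<noteq> UNIV"
      using Suc.prems by (metis dim_UNIV Suc_n_not_le_n)
    then obtain b where "b \<in> S" "b \<notin> span B" "admissible S (insert b B)"
      using admissible_extend[OF fin sph spS B(4)] by blast
    moreover have "finite B" using B(2) by (simp add: independent_imp_finite)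
    moreover have "b \<notin> B" using \<open>b \<notin> span B\<close> span_base by blast
    ultimately show ?case
      using B by (intro exI[of _ "insert b B"]) (auto simp: independent_insertI)
  qed
  then obtain B where B: "B \<subseteq> S" "independent B" "card B = DIM('a)" "admissible S B"
    by blast
  have "UNIV \<subseteq> span B"
    by (rule card_ge_dim_independent) (use B in auto)
  then show ?thesis using B by blast
qed

(* The theorem: take an admissible basis; a witness for e / 2 in the relative norm
   has operator-norm distance below e from the identity. *)
theorem mainTheorem6:
  fixes S :: "(real ^ 'n) set"
  assumes "finite S"
    and "S \<subseteq> sphere 0 1"
    and "span S = UNIV"
    and "\<And>v. v \<in> S \<Longrightarrow> - v \<in> S"
  shows "\<exists>B. B \<subseteq> S \<and> independent B \<and> span B = UNIV \<and>
    (\<forall>e>0. \<exists>F :: real ^ 'n \<Rightarrow> real ^ 'n. linear F \<and> onorm (\<lambda>x. F x - x) < e \<and>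
       (\<forall>v\<in>S. ((v \<in> B \<or> - v \<in> B) \<longrightarrow> norm (F v) = norm v) \<and>
               (\<not> (v \<in> B \<or> - v \<in> B) \<longrightarrow> norm (F v) > norm v)))"
proof -
  obtain B where B: "B \<subseteq> S" "independent B" "span B = UNIV" "admissible S B"
    using admissible_basis_exists[OF assms(1-3)] by blast
  have "\<exists>F :: real ^ 'n \<Rightarrow> real ^ 'n. linear F \<and> onorm (\<lambda>x. F x - x) < e \<and>
      preserves_expands F S B" if e: "0 < e" for e
  proof -
    obtain F where "linear F" "\<And>x. norm (F x - x) \<le> e / 2 * norm x"
      "preserves_expands F (S \<inter> span B) B"
      using B(4) e unfolding admissible_def by (meson half_gt_zero)
    moreover from this(2) have "onorm (\<lambda>x. F x - x) \<le> e / 2" by (rule onorm_le)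
    ultimately show ?thesis using e B(3) by (intro exI[of _ F]) auto
  qed
  then show ?thesis
    using B(1-3) unfolding preserves_expands_def by blast
qed

end
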